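(* Let $X$ be an infinite compact metrizable space and $h\colon X\to X$ a minimal homeomorphism. If $F\subset X$ is a closed topologically $h$-small set, then $F$ is thin.
   Context: A closed set $F\subset X$ is topologically $h$-small if there is $m\in\mathbb{Z}_{+}$ such that whenever $d(0),\dots,d(m)$ are $m+1$ distinct integers, $h^{d(0)}(F)\cap\cdots\cap h^{d(m)}(F)=\varnothing$. For $F\subset X$ closed and $U\subset X$ open, write $F\prec U$ if there exist $M\in\mathbb{N}$, open sets $U_0,\dots,U_M\subset X$ and integers $d(0),\dots,d(M)$ such that $F\subset\bigcup_{j=0}^M U_j$, $h^{d(j)}(U_j)\subset U$ for all $j$, and the sets $h^{d(j)}(U_j)$, $0\le j\le M$, are pairwise disjoint. A closed set $F$ is thin if $F\prec U$ for every non-empty open $U\subset X$. *)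

theory Defs
  imports "HOL-Analysis.Analysis"
begin

definition hpow :: "('a \<Rightarrow> 'a) \<Rightarrow> int \<Rightarrow> 'a \<Rightarrow> 'a" where
  "hpow h d = (if 0 \<le> d then h ^^ nat d else inv h ^^ nat (- d))"

definition minimal_homeo :: "('a::topological_space \<Rightarrow> 'a) \<Rightarrow> bool" where
  "minimal_homeo h \<longleftrightarrow>
     (\<exists>g. homeomorphism UNIV UNIV h g) \<and>
     (\<forall>S. closed S \<and> h ` S = S \<longrightarrow> S = {} \<or> S = UNIV)"

definition top_small :: "('a \<Rightarrow> 'a) \<Rightarrow> 'a set \<Rightarrow> bool" where
  "top_small h F \<longleftrightarrow>
     (\<exists>m::nat. \<forall>d::nat \<Rightarrow> int. inj_on d {0..m} \<longrightarrow>
        (\<Inter>j\<in>{0..m}. hpow h (d j) ` F) = {})"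

definition prec :: "('a::topological_space \<Rightarrow> 'a) \<Rightarrow> 'a set \<Rightarrow> 'a set \<Rightarrow> bool" where
  "prec h F U \<longleftrightarrow>
     (\<exists>(M::nat) (V::nat \<Rightarrow> 'a set) (d::nat \<Rightarrow> int).
        (\<forall>j\<le>M. open (V j)) \<and>
        F \<subseteq> (\<Union>j\<le>M. V j) \<and>
        (\<forall>j\<le>M. hpow h (d j) ` V j \<subseteq> U) \<and>
        (\<forall>i\<le>M. \<forall>j\<le>M. i \<noteq> j \<longrightarrow> hpow h (d i) ` V i \<inter> hpow h (d j) ` V j = {}))"

definition thin :: "('a::topological_space \<Rightarrow> 'a) \<Rightarrow> 'a set \<Rightarrow> bool" where
  "thin h F \<longleftrightarrow> closed F \<and> (\<forall>U. open U \<and> U \<noteq> {} \<longrightarrow> prec h F U)"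

end

theory Submission
  imports Defs
begin

text \<open>Topological smallness bounds by some m the number of times an orbit segment can
  visit F. Since X has no isolated points, U contains m pairwise disjoint nonempty open sets
  W_c, and by minimality and compactness there is an N such that every orbit meets every W_c
  within time N. Induction on m covers F by m open sets V_c each disjoint from its translates
  h^j(V_c), 1 \<le> j \<le> 2N: the points of F that were already in F during the last 2N steps form
  a closed set that orbit segments visit at most m - 1 times, and the remaining part of F is
  closed with disjoint translates, so it has an open neighbourhood with the same property.
  The pieces V_c \<inter> h^-n(W_c), |n| \<le> N, moved into U by h^n, then witness F \<prec> U.\<close>

lemma hpow_0 [simp]: "hpow h 0 = id"
  by (simp add: hpow_def fun_eq_iff)

lemma hpow_1 [simp]: "hpow h 1 = h"
  by (simp add: hpow_def fun_eq_iff)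

lemma hpow_plus_1:
  assumes "bij h"
  shows "hpow h (d + 1) x = h (hpow h d x)"
proof (cases "0 \<le> d")
  case True
  then have "nat (d + 1) = Suc (nat d)" by simp
  with True show ?thesis by (simp add: hpow_def)
next
  case False
  then consider "d = -1" | "nat (- d) = Suc (nat (- (d + 1)))" "d + 1 < 0" by linarith
  then show ?thesis
    using False assms by cases (simp_all add: hpow_def bij_is_surj surj_f_inv_f)
qed

lemma hpow_minus_1:
  assumes "bij h"
  shows "hpow h (d - 1) x = inv h (hpow h d x)"
  using hpow_plus_1[OF assms, of "d - 1" x] assms by (simp add: bij_is_inj)

lemma hpow_add:
  assumes "bij h"
  shows "hpow h (a + b) x = hpow h a (hpow h b x)"
proof (induction a rule: int_induct[where k = 0])
  case (step1 i)
  then show ?case using hpow_plus_1[OF assms, of "i + b"] hpow_plus_1[OF assms, of i]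
    by (simp add: add.commute add.left_commute)
next
  case (step2 i)
  then show ?case using hpow_minus_1[OF assms, of "i + b"] hpow_minus_1[OF assms, of i]
    by (simp add: algebra_simps)
qed simp

lemma hpow_minus_cancel:
  assumes "bij h"
  shows "hpow h (- d) (hpow h d x) = x" "hpow h d (hpow h (- d) x) = x"
  using hpow_add[OF assms, of "- d" d x] hpow_add[OF assms, of d "- d" x] by simp_all

lemma inj_hpow: "bij h \<Longrightarrow> inj (hpow h d)"
  by (rule injI) (metis hpow_minus_cancel(1))

lemma hpow_image_eq_vimage:
  assumes "bij h"
  shows "hpow h d ` S = hpow h (- d) -` S"
  using hpow_minus_cancel[OF assms] by (auto intro: image_eqI[where x = "hpow h (- d) _"])

lemma homeomorphism_UNIV_imp_bij: "homeomorphism UNIV UNIV h g \<Longrightarrow> bij h"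
  by (metis UNIV_I bij_betw_def homeomorphism_def inj_on_inverseI)

lemma continuous_on_hpow:
  assumes hom: "homeomorphism UNIV UNIV h g"
  shows "continuous_on UNIV (hpow h d)"
proof -
  have "inv h = g"
    using hom homeomorphism_UNIV_imp_bij[OF hom]
    by (metis UNIV_I bij_inv_eq_iff homeomorphism_apply2 ext)
  moreover have "continuous_on UNIV (f ^^ n)" if "continuous_on UNIV f" for f :: "'a \<Rightarrow> 'a" and n
    by (induction n) (auto intro: continuous_on_compose2[OF that])
  ultimately show ?thesis
    using hom by (simp add: hpow_def homeomorphism_def)
qed

lemma open_hpow_vimage: "homeomorphism UNIV UNIV h g \<Longrightarrow> open W \<Longrightarrow> open (hpow h d -` W)"
  using continuous_on_hpow open_vimage by blast

lemma closed_hpow_vimage: "homeomorphism UNIV UNIV h g \<Longrightarrow> closed W \<Longrightarrow> closed (hpow h d -` W)"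
  using continuous_on_hpow closed_vimage by blast

lemma closed_hpow_image: "homeomorphism UNIV UNIV h g \<Longrightarrow> closed W \<Longrightarrow> closed (hpow h d ` W)"
  by (simp add: hpow_image_eq_vimage homeomorphism_UNIV_imp_bij closed_hpow_vimage)

lemma minimal_homeo_orbit_meets_open:
  assumes mh: "minimal_homeo h" and W: "open W" "W \<noteq> {}"
  shows "\<exists>n. hpow h n x \<in> W"
proof -
  obtain g where hom: "homeomorphism UNIV UNIV h g"
    using mh by (auto simp: minimal_homeo_def)
  have bij: "bij h" using homeomorphism_UNIV_imp_bij[OF hom] .
  define S where "S = - (\<Union>n. hpow h n -` W)"
  have "closed S"
    unfolding S_def using open_hpow_vimage[OF hom W(1)] by blast
  moreover have "h -` S = S"
  proof -
    have "hpow h n (h y) = hpow h (n + 1) y" for n y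
      using hpow_add[OF bij, of n 1 y] by simp
    then have "h y \<in> S \<longleftrightarrow> y \<in> S" for y
      unfolding S_def by (auto simp del: vimage_UN) (metis diff_add_cancel)
    then show ?thesis by auto
  qed
  then have "h ` S = S"
    by (metis bij bij_is_surj surj_image_vimage_eq)
  moreover obtain w where "w \<in> W" using W(2) by blast
  then have "S \<noteq> UNIV"
    unfolding S_def by (auto intro!: exI[of _ 0])
  ultimately have "S = {}"
    using mh by (auto simp: minimal_homeo_def)
  then show ?thesis unfolding S_def by auto
qed

lemma minimal_homeo_uniform_return:
  fixes h :: "'a::topological_space \<Rightarrow> 'a"
  assumes mh: "minimal_homeo h" and cpt: "compact (UNIV :: 'a set)"
    and W: "open W" "W \<noteq> {}"
  shows "\<exists>N::nat. \<forall>x. \<exists>n. \<bar>n\<bar> \<le> int N \<and> hpow h n x \<in> W"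
proof -
  obtain g where hom: "homeomorphism UNIV UNIV h g"
    using mh by (auto simp: minimal_homeo_def)
  have "UNIV \<subseteq> (\<Union>n\<in>UNIV. hpow h n -` W)"
    using minimal_homeo_orbit_meets_open[OF mh W] by blast
  then obtain D where "finite D" and D: "UNIV \<subseteq> (\<Union>n\<in>D. hpow h n -` W)"
    by (rule compactE_image[OF cpt open_hpow_vimage[OF hom W(1)]])
  define N where "N = nat (Max (insert 0 (abs ` D)))"
  have "\<bar>n\<bar> \<le> int N" if "n \<in> D" for n
  proof -
    have "\<bar>n\<bar> \<le> Max (insert 0 (abs ` D))"
      using \<open>finite D\<close> that by (intro Max_ge) auto
    then show ?thesis unfolding N_def by linarith
  qed
  with D show ?thesis by blast
qed

lemma minimal_homeo_uniform_return_family: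
  fixes h :: "'a::topological_space \<Rightarrow> 'a"
  assumes mh: "minimal_homeo h" and cpt: "compact (UNIV :: 'a set)"
    and "finite C" and W: "\<forall>c\<in>C. open (W c) \<and> W c \<noteq> {}"
  shows "\<exists>N::nat. \<forall>c\<in>C. \<forall>x. \<exists>n. \<bar>n\<bar> \<le> int N \<and> hpow h n x \<in> W c"
proof -
  have "\<forall>c\<in>C. \<exists>N. \<forall>x. \<exists>n. \<bar>n\<bar> \<le> int N \<and> hpow h n x \<in> W c"
    using minimal_homeo_uniform_return[OF mh cpt] W by simp
  then obtain Nc where Nc: "\<forall>c\<in>C. \<forall>x. \<exists>n. \<bar>n\<bar> \<le> int (Nc c) \<and> hpow h n x \<in> W c"
    by (rule bchoice[THEN exE])
  have "Nc c \<le> sum Nc C" if "c \<in> C" for c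
    using \<open>finite C\<close> that by (simp add: member_le_sum)
  then have "\<forall>c\<in>C. \<forall>x. \<exists>n. \<bar>n\<bar> \<le> int (sum Nc C) \<and> hpow h n x \<in> W c"
    using Nc by (meson of_nat_le_iff order_trans)
  then show ?thesis by blast
qed

lemma minimal_homeo_no_isolated_point:
  fixes h :: "'a::topological_space \<Rightarrow> 'a" and x :: 'a
  assumes mh: "minimal_homeo h" and cpt: "compact (UNIV :: 'a set)"
    and inf: "infinite (UNIV :: 'a set)"
  shows "\<not> open {x}"
proof
  assume "open {x}"
  then obtain N where N: "\<forall>y. \<exists>n. \<bar>n\<bar> \<le> int N \<and> hpow h n y = x"
    using minimal_homeo_uniform_return[OF mh cpt \<open>open {x}\<close>] by auto
  have bij: "bij h"
    using mh homeomorphism_UNIV_imp_bij by (auto simp: minimal_homeo_def)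
  have "UNIV \<subseteq> (\<lambda>n. hpow h (- n) x) ` {- int N..int N}"
  proof
    fix y
    obtain n where "\<bar>n\<bar> \<le> int N" "hpow h n y = x" using N by blast
    then show "y \<in> (\<lambda>n. hpow h (- n) x) ` {- int N..int N}"
      using hpow_minus_cancel(1)[OF bij, of n y] by (intro image_eqI[of _ _ n]) auto
  qed
  with inf show False by (meson finite_atLeastAtMost_int finite_imageI finite_subset)
qed

lemma disjoint_open_subsets:
  fixes U :: "'a::t2_space set" and K :: nat
  assumes perfect: "\<And>x::'a. \<not> open {x}" and U: "open U" "U \<noteq> {}"
  shows "\<exists>V. (\<forall>c<K. open (V c) \<and> V c \<noteq> {} \<and> V c \<subseteq> U) \<and> disjoint_family_on V {..<K}"
  using U
proof (induction K arbitrary: U)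
  case 0
  then show ?case by (simp add: disjoint_family_on_def)
next
  case (Suc K)
  obtain x where "x \<in> U" using Suc.prems by blast
  moreover have "U \<noteq> {x}" using perfect[of x] Suc.prems(1) by auto
  ultimately obtain y where "y \<in> U" "y \<noteq> x" by blast
  then obtain A B where AB: "open A" "open B" "x \<in> A" "y \<in> B" "A \<inter> B = {}"
    using hausdorff by metis
  have "open (U \<inter> B)" "U \<inter> B \<noteq> {}"
    using Suc.prems AB \<open>y \<in> U\<close> by auto
  then obtain V where V: "\<forall>c<K. open (V c) \<and> V c \<noteq> {} \<and> V c \<subseteq> U \<inter> B"
    and disj: "disjoint_family_on V {..<K}"
    using Suc.IH by blast
  let ?V = "V(K := U \<inter> A)"
  have "\<forall>c<Suc K. open (?V c) \<and> ?V c \<noteq> {} \<and> ?V c \<subseteq> U"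
    using V AB Suc.prems \<open>x \<in> U\<close> by (auto simp: less_Suc_eq)
  moreover have "disjoint_family_on ?V {..<Suc K}"
    using disj V AB unfolding disjoint_family_on_def by (auto simp: less_Suc_eq) blast+
  ultimately show ?case by blast
qed

definition visits :: "('a \<Rightarrow> 'a) \<Rightarrow> 'a set \<Rightarrow> nat \<Rightarrow> 'a \<Rightarrow> nat" where
  "visits h F S x = card {j. j \<le> S \<and> hpow h (int j) x \<in> F}"

lemma visits_pos: "x \<in> F \<Longrightarrow> 0 < visits h F S x"
  unfolding visits_def by (subst card_gt_0_iff) (auto intro!: exI[of _ 0])

lemma top_small_imp_visits_bounded:
  assumes bij: "bij h" and "top_small h F"
  obtains m where "\<And>S x. visits h F S x \<le> m"
proof -
  obtain m where small: "\<forall>d::nat \<Rightarrow> int. inj_on d {0..m} \<longrightarrow> (\<Inter>j\<in>{0..m}. hpow h (d j) ` F) = {}"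
    using \<open>top_small h F\<close> unfolding top_small_def by blast
  have "visits h F S x \<le> m" for S x
  proof (rule ccontr)
    define T where "T = {j. j \<le> S \<and> hpow h (int j) x \<in> F}"
    assume "\<not> visits h F S x \<le> m"
    then have "Suc m \<le> card T" unfolding visits_def T_def by simp
    then obtain T' where T': "T' \<subseteq> T" "card T' = Suc m" "finite T'"
      by (rule obtain_subset_with_card_n)
    then obtain f where f: "bij_betw f {0..m} T'"
      using ex_bij_betw_nat_finite[OF \<open>finite T'\<close>] by (metis atLeastLessThanSuc_atLeastAtMost)
    define d where "d i = - int (f i)" for i
    have "inj_on d {0..m}"
      using f unfolding d_def bij_betw_def inj_on_def by simp
    moreover have "x \<in> hpow h (d i) ` F" if "i \<in> {0..m}" for i
    proof -
      have "hpow h (int (f i)) x \<in> F"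
        using f T' that unfolding bij_betw_def T_def by blast
      moreover have "hpow h (d i) (hpow h (int (f i)) x) = x"
        unfolding d_def using hpow_minus_cancel(1)[OF bij] by simp
      ultimately show ?thesis by (metis image_eqI)
    qed
    ultimately show False using small by blast
  qed
  then show thesis by (rule that)
qed

definition disjoint_translates :: "('a \<Rightarrow> 'a) \<Rightarrow> nat \<Rightarrow> 'a set \<Rightarrow> bool" where
  "disjoint_translates h N V \<longleftrightarrow> (\<forall>j\<in>{1..N}. V \<inter> hpow h (int j) ` V = {})"

lemma disjoint_translates_hpow_images:
  assumes bij: "bij h" and V: "disjoint_translates h N V"
    and "n \<noteq> n'" "\<bar>n - n'\<bar> \<le> int N"
  shows "hpow h n ` V \<inter> hpow h n' ` V = {}"
proof -
  have "hpow h a ` V \<inter> hpow h b ` V = {}" if "a < b" "b - a \<le> int N" for a b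
  proof -
    have "hpow h b ` V = hpow h a ` hpow h (int (nat (b - a))) ` V"
      using hpow_add[OF bij, of a "b - a"] that by (simp add: image_image)
    moreover have "nat (b - a) \<in> {1..N}"
      using that by auto
    then have "V \<inter> hpow h (int (nat (b - a))) ` V = {}"
      using V unfolding disjoint_translates_def by blast
    ultimately show ?thesis
      by (simp add: image_Int[OF inj_hpow[OF bij], symmetric])
  qed
  from this[of n n'] this[of n' n] show ?thesis
    using assms(3,4) by (cases "n < n'") (auto simp: Int_commute)
qed

lemma disjoint_translates_open_neighbourhood:
  fixes R :: "'a::t4_space set"
  assumes hom: "homeomorphism UNIV UNIV h g" and "closed R" and R: "disjoint_translates h N R"
  shows "\<exists>V. open V \<and> R \<subseteq> V \<and> disjoint_translates h N V"
proof -
  have "\<exists>W. open W \<and> R \<subseteq> W \<and> W \<inter> hpow h (int j) ` W = {}" if j: "j \<in> {1..N}" for j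
  proof -
    have disj: "R \<inter> hpow h (int j) ` R = {}"
      using R j unfolding disjoint_translates_def by blast
    obtain A B where AB: "open A" "open B" "R \<subseteq> A" "hpow h (int j) ` R \<subseteq> B" "A \<inter> B = {}"
      using t4_space[OF \<open>closed R\<close> closed_hpow_image[OF hom \<open>closed R\<close>] disj] by blast
    define W where "W = A \<inter> hpow h (int j) -` B"
    have "open W"
      unfolding W_def using AB open_hpow_vimage[OF hom] by blast
    moreover have "R \<subseteq> W" "W \<inter> hpow h (int j) ` W = {}"
      unfolding W_def using AB by auto
    ultimately show ?thesis by blast
  qed
  then have "\<forall>j\<in>{1..N}. \<exists>W. open W \<and> R \<subseteq> W \<and> W \<inter> hpow h (int j) ` W = {}"
    by blast
  then obtain W where W: "\<forall>j\<in>{1..N}. open (W j) \<and> R \<subseteq> W j \<and> W j \<inter> hpow h (int j) ` W j = {}"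
    by (rule bchoice[THEN exE])
  have "open (\<Inter>j\<in>{1..N}. W j)" "R \<subseteq> (\<Inter>j\<in>{1..N}. W j)"
    using W by auto
  moreover have "disjoint_translates h N (\<Inter>j\<in>{1..N}. W j)"
    unfolding disjoint_translates_def
  proof
    fix j assume j: "j \<in> {1..N}"
    then have sub: "(\<Inter>i\<in>{1..N}. W i) \<subseteq> W j" by blast
    from W j have "W j \<inter> hpow h (int j) ` W j = {}" by blast
    with sub image_mono[OF sub, of "hpow h (int j)"]
    show "(\<Inter>i\<in>{1..N}. W i) \<inter> hpow h (int j) ` (\<Inter>i\<in>{1..N}. W i) = {}"
      by blast
  qed
  ultimately show ?thesis by blast
qed

definition returns_within :: "('a \<Rightarrow> 'a) \<Rightarrow> nat \<Rightarrow> 'a set \<Rightarrow> 'a set" where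
  "returns_within h N F = {x \<in> F. \<exists>j\<in>{1..N}. hpow h (- int j) x \<in> F}"

lemma closed_returns_within:
  assumes hom: "homeomorphism UNIV UNIV h g" and "closed F"
  shows "closed (returns_within h N F)"
proof -
  have "returns_within h N F = F \<inter> (\<Union>j\<in>{1..N}. hpow h (- int j) -` F)"
    unfolding returns_within_def by blast
  then show ?thesis
    using assms closed_hpow_vimage[OF hom] by (simp add: closed_Int closed_UN)
qed

lemma disjoint_translates_outside_returns_within:
  assumes bij: "bij h" and "R \<subseteq> F" and "R \<inter> returns_within h N F = {}"
  shows "disjoint_translates h N R"
  unfolding disjoint_translates_def
proof (intro ballI equalityI subsetI)
  fix j y assume j: "j \<in> {1..N}" and y: "y \<in> R \<inter> hpow h (int j) ` R"
  then obtain z where "z \<in> R" "y = hpow h (int j) z" by blast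
  then have "hpow h (- int j) y \<in> F"
    using \<open>R \<subseteq> F\<close> hpow_minus_cancel(1)[OF bij] by auto
  with j y assms(2,3) show "y \<in> {}"
    unfolding returns_within_def by blast
qed simp

text \<open>Shifting the window by N turns visits to \<open>returns_within h N F\<close> into visits to F, and
  the first of them comes with one more visit to F at most N steps earlier.\<close>

lemma visits_returns_within:
  assumes bij: "bij h" and vis: "\<And>y. visits h F S y \<le> Suc k" and "N \<le> S"
  shows "visits h (returns_within h N F) (S - N) x \<le> k"
proof (cases "{j. j \<le> S - N \<and> hpow h (int j) x \<in> returns_within h N F} = {}")
  case True
  then show ?thesis unfolding visits_def True by simp
next
  case False
  define T where "T = {j. j \<le> S - N \<and> hpow h (int j) x \<in> returns_within h N F}"
  define x' where "x' = hpow h (- int N) x"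
  define T' where "T' = {j. j \<le> S \<and> hpow h (int j) x' \<in> F}"
  have x': "hpow h (int j) x' = hpow h (int j - int N) x" for j
    unfolding x'_def using hpow_add[OF bij, of "int j" "- int N" x] by simp
  have "finite T" "T \<noteq> {}" using False unfolding T_def by simp_all
  define j0 where "j0 = Min T"
  have "j0 \<in> T" "\<And>t. t \<in> T \<Longrightarrow> j0 \<le> t"
    using \<open>finite T\<close> \<open>T \<noteq> {}\<close> unfolding j0_def by simp_all
  then obtain i where i: "i \<in> {1..N}" "hpow h (- int i) (hpow h (int j0) x) \<in> F"
    unfolding T_def returns_within_def by blast
  have "(\<lambda>j. j + N) ` T \<subseteq> T'"
    using \<open>N \<le> S\<close> x' unfolding T_def T'_def returns_within_def by auto
  moreover have "j0 + N - i \<in> T'"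
  proof -
    have "int (j0 + N - i) - int N = - int i + int j0" using i by auto
    then show ?thesis
      using i \<open>j0 \<in> T\<close> \<open>N \<le> S\<close> x' hpow_add[OF bij, of "- int i" "int j0" x]
      unfolding T'_def T_def by auto
  qed
  moreover have "j0 + N - i \<notin> (\<lambda>j. j + N) ` T"
    using \<open>\<And>t. t \<in> T \<Longrightarrow> j0 \<le> t\<close> i by fastforce
  ultimately have "Suc (card T) \<le> card T'"
    using \<open>finite T\<close> card_mono[of T' "insert (j0 + N - i) ((\<lambda>j. j + N) ` T)"]
    by (simp add: T'_def card_image)
  moreover have "card T' \<le> Suc k"
    using vis[of x'] unfolding visits_def T'_def .
  ultimately show ?thesis unfolding visits_def T_def by simp
qed

lemma open_cover_disjoint_translates:
  fixes h :: "'a::t4_space \<Rightarrow> 'a"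
  assumes hom: "homeomorphism UNIV UNIV h g"
  shows "closed F \<Longrightarrow> (\<And>x. visits h F S x \<le> k) \<Longrightarrow> k * N \<le> S \<Longrightarrow>
    \<exists>V. (\<forall>c<k. open (V c) \<and> disjoint_translates h N (V c)) \<and> F \<subseteq> (\<Union>c<k. V c)"
proof (induction k arbitrary: F S)
  case 0
  then have "F = {}" using visits_pos by (metis not_less_zero le_zero_eq ex_in_conv)
  then show ?case by simp
next
  case (Suc k)
  have bij: "bij h" using homeomorphism_UNIV_imp_bij[OF hom] .
  have SN: "k * N \<le> S - N" "N \<le> S" using Suc.prems(3) by auto
  have "\<And>x. visits h (returns_within h N F) (S - N) x \<le> k"
    using visits_returns_within[OF bij Suc.prems(2) SN(2)] .
  from Suc.IH[OF closed_returns_within[OF hom Suc.prems(1)] this SN(1)]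
  obtain V where V: "\<forall>c<k. open (V c) \<and> disjoint_translates h N (V c)"
    and returns: "returns_within h N F \<subseteq> (\<Union>c<k. V c)"
    by blast
  define R where "R = F - (\<Union>c<k. V c)"
  have "closed R"
    unfolding R_def using Suc.prems(1) V by (intro closed_Diff open_UN) auto
  moreover have "disjoint_translates h N R"
    using returns by (intro disjoint_translates_outside_returns_within[OF bij]) (auto simp: R_def)
  ultimately obtain V0 where V0: "open V0" "R \<subseteq> V0" "disjoint_translates h N V0"
    using disjoint_translates_open_neighbourhood[OF hom] by blast
  have "\<forall>c<Suc k. open ((V(k := V0)) c) \<and> disjoint_translates h N ((V(k := V0)) c)"
    using V V0 by (simp add: less_Suc_eq)
  moreover have "F \<subseteq> (\<Union>c<Suc k. (V(k := V0)) c)"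
    using V0(2) unfolding R_def lessThan_Suc by auto
  ultimately show ?case by blast
qed

lemma prec_finite_family:
  assumes "finite I" and "\<forall>i\<in>I. open (V i)" and "F \<subseteq> (\<Union>i\<in>I. V i)"
    and "\<forall>i\<in>I. hpow h (d i) ` V i \<subseteq> U"
    and "disjoint_family_on (\<lambda>i. hpow h (d i) ` V i) I"
  shows "prec h F U"
proof -
  obtain e where e: "bij_betw e {0..<card I} I"
    using ex_bij_betw_nat_finite[OF \<open>finite I\<close>] by blast
  define V' where "V' j = (if j < card I then V (e j) else {})" for j
  have opn: "\<forall>j. open (V' j)"
    using assms(2) e by (simp add: V'_def bij_betwE)
  have cover: "F \<subseteq> (\<Union>j\<le>card I - 1. V' j)"
  proof
    fix x assume "x \<in> F"
    then obtain i where "i \<in> I" "x \<in> V i" using assms(3) by blast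
    then obtain j where "j < card I" "e j = i"
      using e by (metis atLeastLessThan_iff bij_betw_iff_bijections)
    with \<open>x \<in> V i\<close> show "x \<in> (\<Union>j\<le>card I - 1. V' j)"
      unfolding V'_def by (intro UN_I[of j]) auto
  qed
  have sub: "\<forall>j. hpow h (d (e j)) ` V' j \<subseteq> U"
    using assms(4) e by (simp add: V'_def bij_betwE)
  have disj: "hpow h (d (e i)) ` V' i \<inter> hpow h (d (e j)) ` V' j = {}" if "i \<noteq> j" for i j
  proof (cases "i < card I \<and> j < card I")
    case True
    then have "i \<in> {0..<card I}" "j \<in> {0..<card I}" by auto
    then have "e i \<noteq> e j" "e i \<in> I" "e j \<in> I"
      using \<open>i \<noteq> j\<close> inj_on_eq_iff[OF bij_betw_imp_inj_on[OF e]] bij_betw_apply[OF e]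
      by auto
    then show ?thesis
      using True assms(5) unfolding V'_def disjoint_family_on_def by auto
  qed (auto simp: V'_def)
  show ?thesis
    unfolding prec_def
    using opn cover sub by (intro exI[of _ "card I - 1"] exI[of _ V'] exI[of _ "\<lambda>j. d (e j)"] conjI)
      (simp_all add: disj)
qed

lemma prec_of_disjoint_translates_cover:
  fixes m N :: nat
  assumes hom: "homeomorphism UNIV UNIV h g"
    and W: "\<forall>c<m. open (W c) \<and> W c \<subseteq> U" "disjoint_family_on W {..<m}"
    and return: "\<forall>c<m. \<forall>x. \<exists>n. \<bar>n\<bar> \<le> int N \<and> hpow h n x \<in> W c"
    and V: "\<forall>c<m. open (V c) \<and> disjoint_translates h (2 * N) (V c)" "F \<subseteq> (\<Union>c<m. V c)"
  shows "prec h F U"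
proof -
  have bij: "bij h" using homeomorphism_UNIV_imp_bij[OF hom] .
  define P where "P = (\<lambda>(c, n). V c \<inter> hpow h n -` W c)"
  show ?thesis
  proof (rule prec_finite_family[where V = P and d = snd and I = "{..<m} \<times> {- int N..int N}"])
    show "\<forall>i\<in>{..<m} \<times> {- int N..int N}. open (P i)"
      using V(1) W(1) open_hpow_vimage[OF hom] by (auto simp: P_def)
    show "F \<subseteq> (\<Union>i\<in>{..<m} \<times> {- int N..int N}. P i)"
    proof
      fix x assume "x \<in> F"
      then obtain c where "c < m" "x \<in> V c" using V(2) by blast
      moreover obtain n where "\<bar>n\<bar> \<le> int N" "hpow h n x \<in> W c"
        using return \<open>c < m\<close> by blast
      ultimately show "x \<in> (\<Union>i\<in>{..<m} \<times> {- int N..int N}. P i)"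
        by (intro UN_I[of "(c, n)"]) (auto simp: P_def)
    qed
    show "\<forall>i\<in>{..<m} \<times> {- int N..int N}. hpow h (snd i) ` P i \<subseteq> U"
      using W(1) by (auto simp: P_def)
    have "hpow h n ` P (c, n) \<inter> hpow h n' ` P (c', n') = {}"
      if "c < m" "c' < m" "n \<in> {- int N..int N}" "n' \<in> {- int N..int N}" "(c, n) \<noteq> (c', n')"
      for c n c' n'
    proof (cases "c = c'")
      case True
      then have "n \<noteq> n'" "\<bar>n - n'\<bar> \<le> int (2 * N)"
        using that by auto
      then have "hpow h n ` V c \<inter> hpow h n' ` V c = {}"
        using disjoint_translates_hpow_images[OF bij] V(1) \<open>c < m\<close> by blast
      then show ?thesis using True by (auto simp: P_def)
    next
      case False
      then have "W c \<inter> W c' = {}"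
        using W(2) that unfolding disjoint_family_on_def by blast
      then show ?thesis by (auto simp: P_def)
    qed
    then show "disjoint_family_on (\<lambda>i. hpow h (snd i) ` P i) ({..<m} \<times> {- int N..int N})"
      unfolding disjoint_family_on_def by auto
  qed simp
qed

theorem proposition3p11:
  fixes h :: "'a::metric_space \<Rightarrow> 'a" and F :: "'a set"
  assumes "infinite (UNIV :: 'a set)"
    and "compact (UNIV :: 'a set)"
    and "minimal_homeo h"
    and "closed F"
    and "top_small h F"
  shows "thin h F"
  unfolding thin_def
proof (intro conjI allI impI)
  fix U :: "'a set"
  assume U: "open U \<and> U \<noteq> {}"
  obtain g where hom: "homeomorphism UNIV UNIV h g"
    using \<open>minimal_homeo h\<close> by (auto simp: minimal_homeo_def)
  obtain m where visits: "\<And>S x. visits h F S x \<le> m"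
    using top_small_imp_visits_bounded[OF homeomorphism_UNIV_imp_bij[OF hom] \<open>top_small h F\<close>]
    by blast
  obtain W where W: "\<forall>c<m. open (W c) \<and> W c \<noteq> {} \<and> W c \<subseteq> U" "disjoint_family_on W {..<m}"
    using disjoint_open_subsets[OF minimal_homeo_no_isolated_point[OF assms(3,2,1)]] U by blast
  obtain N where N: "\<forall>c<m. \<forall>x. \<exists>n. \<bar>n\<bar> \<le> int N \<and> hpow h n x \<in> W c"
    using minimal_homeo_uniform_return_family[OF assms(3,2), of "{..<m}" W] W(1)
    by (metis finite_lessThan lessThan_iff)
  obtain V where "\<forall>c<m. open (V c) \<and> disjoint_translates h (2 * N) (V c)" "F \<subseteq> (\<Union>c<m. V c)"
    using open_cover_disjoint_translates[OF hom \<open>closed F\<close> visits order_refl] by blast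
  with hom W N show "prec h F U"
    by (intro prec_of_disjoint_translates_cover) auto
qed fact

end
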